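(* Let $\Gamma$ be a valued structure with finite signature $\tau$ and domain $C$, let $\Delta$ be a valued $\tau$-structure with finite domain $D$ such that there is a fractional homomorphism from $\Delta$ to $\Gamma$, and let $m\ge2$ be an integer. If $\Gamma$ has an $m$-ary fully symmetric fractional polymorphism, then there is a fractional homomorphism from $\mathcal{P}^m(\Delta)$ to $\Gamma$.
   Context: A valued structure consists of a signature $\tau$ of function symbols with arities, a domain, and for each $f\in\tau$ a cost function from the domain to the power $\mathrm{ar}(f)$ into $\mathbb{Q}\cup\{+\infty\}$. A fractional homomorphism from a valued $\tau$-structure $\Delta$ (domain $D$) to $\Gamma$ (domain $C$) is a map $\omega\colon C^D\to\mathbb{Q}_{\ge0}$ with finite support and $\sum_g\omega(g)=1$ such that $\sum_g\omega(g)f^\Gamma(g(a))\le f^\Delta(a)$ for all $f\in\tau$, $a\in D^{\mathrm{ar}(f)}$ ($g$ applied componentwise). An $m$-ary fractional polymorphism of $\Gamma$ is a map $\omega$ from operations $C^m\to C$ to $\mathbb{Q}_{\ge0}$ with finite support, $\sum_g\omega(g)=1$, and $\sum_g\omega(g)f^\Gamma(g(a^1,\dots,a^m))\le\frac1m\sum_{i=1}^m f^\Gamma(a^i)$ for all $f\in\tau$, $a^1,\dots,a^m\in C^{\mathrm{ar}(f)}$. It is fully symmetric if every operation in its support satisfies $g(x_1,\dots,x_m)=g(x_{\pi(1)},\dots,x_{\pi(m)})$ for all permutations $\pi$. The multiset structure $\mathcal{P}^m(\Delta)$ is the valued $\tau$-structure whose domain is the set of multisets of size $m$ of elements of $D$,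 with, for $k$-ary $f\in\tau$ and multisets $\alpha_1,\dots,\alpha_k$, $f^{\mathcal{P}^m(\Delta)}(\alpha_1,\dots,\alpha_k)=\frac1m\min\sum_{i=1}^m f^\Delta(t^1_i,\dots,t^k_i)$, the minimum over all $t^1,\dots,t^k\in D^m$ such that the multiset of coordinates of $t^l$ is $\alpha_l$ for each $l$. *)

theory Defs
  imports "HOL-Library.Extended_Real" "HOL-Library.Multiset" "HOL-Library.FuncSet"
          "HOL-Combinatorics.Permutations"
begin

text \<open>A valued structure over (tau, ar) is given by a domain A (a set) and a cost map
  F :: 's => 'a list => ereal, where F f is only meaningful on lists of length ar f
  with entries in A.\<close>

definition rat_or_inf :: "ereal \<Rightarrow> bool" where
  "rat_or_inf x \<longleftrightarrow> x = \<infinity> \<or> (\<exists>q::rat. x = ereal (of_rat q))"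

definition valued_structure ::
  "'s set \<Rightarrow> ('s \<Rightarrow> nat) \<Rightarrow> 'a set \<Rightarrow> ('s \<Rightarrow> 'a list \<Rightarrow> ereal) \<Rightarrow> bool" where
  "valued_structure tau ar A F \<longleftrightarrow>
     (\<forall>f\<in>tau. \<forall>a. length a = ar f \<and> set a \<subseteq> A \<longrightarrow> rat_or_inf (F f a))"

definition supp_w :: "('x \<Rightarrow> rat) \<Rightarrow> 'x set" where
  "supp_w w = {g. w g \<noteq> 0}"

definition frac_hom ::
  "'s set \<Rightarrow> ('s \<Rightarrow> nat) \<Rightarrow> 'a set \<Rightarrow> ('s \<Rightarrow> 'a list \<Rightarrow> ereal)
   \<Rightarrow> 'b set \<Rightarrow> ('s \<Rightarrow> 'b list \<Rightarrow> ereal) \<Rightarrow> (('a \<Rightarrow> 'b) \<Rightarrow> rat) \<Rightarrow> bool" where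
  "frac_hom tau ar A FA B FB w \<longleftrightarrow>
     finite (supp_w w) \<and> (\<forall>g. w g \<ge> 0) \<and> (\<forall>g\<in>supp_w w. g \<in> A \<rightarrow> B) \<and>
     sum w (supp_w w) = 1 \<and>
     (\<forall>f\<in>tau. \<forall>a. length a = ar f \<and> set a \<subseteq> A \<longrightarrow>
        (\<Sum>g\<in>supp_w w. ereal (of_rat (w g)) * FB f (map g a)) \<le> FA f a)"

text \<open>m-ary fractional polymorphism; an m-ary operation on C is represented as a
  function on lists, only its values on lists of length m with entries in C matter.\<close>
definition frac_pol ::
  "'s set \<Rightarrow> ('s \<Rightarrow> nat) \<Rightarrow> 'c set \<Rightarrow> ('s \<Rightarrow> 'c list \<Rightarrow> ereal) \<Rightarrow> nat
   \<Rightarrow> (('c list \<Rightarrow> 'c) \<Rightarrow> rat) \<Rightarrow> bool" where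
  "frac_pol tau ar C F m w \<longleftrightarrow>
     finite (supp_w w) \<and> (\<forall>g. w g \<ge> 0) \<and>
     (\<forall>g\<in>supp_w w. \<forall>xs. length xs = m \<and> set xs \<subseteq> C \<longrightarrow> g xs \<in> C) \<and>
     sum w (supp_w w) = 1 \<and>
     (\<forall>f\<in>tau. \<forall>as. length as = m \<and> (\<forall>a\<in>set as. length a = ar f \<and> set a \<subseteq> C) \<longrightarrow>
        (\<Sum>g\<in>supp_w w. ereal (of_rat (w g)) *
            F f (map (\<lambda>j. g (map (\<lambda>a. a ! j) as)) [0..<ar f]))
        \<le> ereal (1 / real m) * (\<Sum>a\<leftarrow>as. F f a))"

definition fully_symmetric :: "'c set \<Rightarrow> nat \<Rightarrow> (('c list \<Rightarrow> 'c) \<Rightarrow> rat) \<Rightarrow> bool" where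
  "fully_symmetric C m w \<longleftrightarrow>
     (\<forall>g\<in>supp_w w. \<forall>xs \<pi>. length xs = m \<and> set xs \<subseteq> C \<and> \<pi> permutes {..<m} \<longrightarrow>
        g xs = g (map (\<lambda>i. xs ! \<pi> i) [0..<m]))"

definition multiset_dom :: "nat \<Rightarrow> 'd set \<Rightarrow> 'd multiset set" where
  "multiset_dom m D = {\<alpha>. size \<alpha> = m \<and> set_mset \<alpha> \<subseteq> D}"

definition multiset_cost ::
  "nat \<Rightarrow> 'd set \<Rightarrow> ('s \<Rightarrow> 'd list \<Rightarrow> ereal) \<Rightarrow> 's \<Rightarrow> 'd multiset list \<Rightarrow> ereal" where
  "multiset_cost m D F f \<alpha>s =
     ereal (1 / real m) *
     Min {(\<Sum>i<m. F f (map (\<lambda>t. t ! i) ts)) | ts.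
            length ts = length \<alpha>s \<and>
            (\<forall>l<length \<alpha>s. length (ts ! l) = m \<and> set (ts ! l) \<subseteq> D \<and> mset (ts ! l) = \<alpha>s ! l)}"

end

theory Submission
  imports Defs
begin

text \<open>Compose the fractional homomorphism \<open>\<omega>\<^sub>1\<close> with the fully symmetric fractional
  polymorphism \<open>\<omega>\<^sub>2\<close>: a pair \<open>(g, p)\<close> sends a multiset \<open>\<alpha>\<close> to \<open>p (g x\<^sub>1, \<dots>, g x\<^sub>m)\<close> for
  any enumeration \<open>x\<^sub>1, \<dots>, x\<^sub>m\<close> of \<open>\<alpha>\<close>, which is well defined by full symmetry, and gets
  weight \<open>\<omega>\<^sub>1(g) \<omega>\<^sub>2(p)\<close>. For a tuple of multisets take enumerations attaining the minimum
  in the cost of \<open>\<P>\<^sup>m(\<Delta>)\<close>; averaging over \<open>p\<close> bounds the cost by the mean over the \<open>m\<close>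
  columns of the \<open>g\<close>-images, and averaging over \<open>g\<close> bounds that by the mean of the
  \<open>\<Delta>\<close>-costs of the columns, which is the multiset cost.\<close>

lemma sum_distrib_left_ereal:
  "c \<ge> 0 \<Longrightarrow> ereal c * sum f A = (\<Sum>x\<in>A. ereal c * f x)"
  using sum_distrib_right_ereal[of c f A] by (simp add: mult.commute)

lemma frac_hom_funcset: "frac_hom tau ar A FA B FB w \<Longrightarrow> g \<in> supp_w w \<Longrightarrow> g \<in> A \<rightarrow> B"
  unfolding frac_hom_def by blast

lemma frac_hom_cost_le:
  assumes "frac_hom tau ar A FA B FB w" and "f \<in> tau" and "length a = ar f" and "set a \<subseteq> A"
  shows "(\<Sum>g\<in>supp_w w. ereal (of_rat (w g)) * FB f (map g a)) \<le> FA f a"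
  using assms unfolding frac_hom_def by blast

lemma frac_pol_closed:
  "frac_pol tau ar C F m w \<Longrightarrow> p \<in> supp_w w \<Longrightarrow> length xs = m \<Longrightarrow> set xs \<subseteq> C \<Longrightarrow> p xs \<in> C"
  unfolding frac_pol_def by blast

lemma frac_pol_cost_le:
  assumes "frac_pol tau ar C F m w" and "f \<in> tau" and "length as = m"
    and "\<And>a. a \<in> set as \<Longrightarrow> length a = ar f \<and> set a \<subseteq> C"
  shows "(\<Sum>p\<in>supp_w w. ereal (of_rat (w p)) * F f (map (\<lambda>j. p (map (\<lambda>a. a ! j) as)) [0..<ar f]))
    \<le> ereal (1 / real m) * (\<Sum>a\<leftarrow>as. F f a)"
  using assms unfolding frac_pol_def by blast

definition push_weight :: "('q \<Rightarrow> 'h) \<Rightarrow> 'q set \<Rightarrow> ('q \<Rightarrow> rat) \<Rightarrow> 'h \<Rightarrow> rat" where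
  "push_weight H Q v h = (\<Sum>q\<in>{q\<in>Q. H q = h}. v q)"

lemma push_weight_nonneg: "(\<And>q. q \<in> Q \<Longrightarrow> v q \<ge> 0) \<Longrightarrow> push_weight H Q v h \<ge> 0"
  unfolding push_weight_def by (auto intro: sum_nonneg)

lemma supp_push_weight: "supp_w (push_weight H Q v) \<subseteq> H ` Q"
  unfolding supp_w_def push_weight_def by (force dest: sum.not_neutral_contains_not_neutral)

lemma sum_supp_push_weight:
  assumes "finite Q" and "\<And>h. push_weight H Q v h = 0 \<Longrightarrow> \<phi> h = 0"
  shows "(\<Sum>h\<in>supp_w (push_weight H Q v). \<phi> h) = (\<Sum>h\<in>H ` Q. \<phi> h)"
  using assms by (intro sum.mono_neutral_left supp_push_weight) (auto simp: supp_w_def)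

lemma sum_push_weight:
  assumes "finite Q"
  shows "sum (push_weight H Q v) (supp_w (push_weight H Q v)) = sum v Q"
proof -
  have "sum (push_weight H Q v) (supp_w (push_weight H Q v)) = sum (push_weight H Q v) (H ` Q)"
    using assms by (rule sum_supp_push_weight)
  also have "\<dots> = sum v Q"
    unfolding push_weight_def using assms by (intro sum.group) auto
  finally show ?thesis .
qed

lemma sum_push_weight_ereal:
  assumes "finite Q" and "\<And>q. q \<in> Q \<Longrightarrow> v q \<ge> 0"
  shows "(\<Sum>h\<in>supp_w (push_weight H Q v). ereal (of_rat (push_weight H Q v h)) * \<phi> h)
       = (\<Sum>q\<in>Q. ereal (of_rat (v q)) * \<phi> (H q))"
proof -
  have fibre: "ereal (of_rat (push_weight H Q v h)) * \<phi> h
      = (\<Sum>q\<in>{q\<in>Q. H q = h}. ereal (of_rat (v q)) * \<phi> (H q))" for h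
  proof -
    have "ereal (of_rat (push_weight H Q v h)) * \<phi> h
        = (\<Sum>q\<in>{q\<in>Q. H q = h}. ereal (of_rat (v q))) * \<phi> h"
      by (simp add: push_weight_def of_rat_sum)
    also have "\<dots> = (\<Sum>q\<in>{q\<in>Q. H q = h}. ereal (of_rat (v q)) * \<phi> h)"
      using assms(2) by (intro sum_ereal_left_distrib) auto
    finally show ?thesis
      by simp
  qed
  have "(\<Sum>h\<in>supp_w (push_weight H Q v). ereal (of_rat (push_weight H Q v h)) * \<phi> h)
      = (\<Sum>h\<in>H ` Q. ereal (of_rat (push_weight H Q v h)) * \<phi> h)"
    using assms(1) by (rule sum_supp_push_weight) simp
  also have "\<dots> = (\<Sum>q\<in>Q. ereal (of_rat (v q)) * \<phi> (H q))"
    unfolding fibre using assms(1) by (intro sum.group) auto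
  finally show ?thesis .
qed

lemma frac_hom_push_weight:
  assumes "finite Q" and "\<And>q. q \<in> Q \<Longrightarrow> v q \<ge> 0" and "sum v Q = 1"
    and "\<And>q. q \<in> Q \<Longrightarrow> H q \<in> A \<rightarrow> B"
    and "\<And>f a. f \<in> tau \<Longrightarrow> length a = ar f \<Longrightarrow> set a \<subseteq> A \<Longrightarrow>
           (\<Sum>q\<in>Q. ereal (of_rat (v q)) * FB f (map (H q) a)) \<le> FA f a"
  shows "frac_hom tau ar A FA B FB (push_weight H Q v)"
  unfolding frac_hom_def
proof (intro conjI allI ballI impI)
  show "finite (supp_w (push_weight H Q v))"
    using assms(1) supp_push_weight by (rule finite_surj)
  show "push_weight H Q v g \<ge> 0" for g
    using assms(2) by (rule push_weight_nonneg)
  show "g \<in> A \<rightarrow> B" if "g \<in> supp_w (push_weight H Q v)" for g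
    using that supp_push_weight assms(4) by fastforce
  show "sum (push_weight H Q v) (supp_w (push_weight H Q v)) = 1"
    using assms(1,3) by (simp add: sum_push_weight)
  show "(\<Sum>g\<in>supp_w (push_weight H Q v). ereal (of_rat (push_weight H Q v g)) * FB f (map g a))
      \<le> FA f a" if "f \<in> tau" and "length a = ar f \<and> set a \<subseteq> A" for f a
    using that assms(5) by (simp add: sum_push_weight_ereal[OF assms(1,2), where \<phi> = "\<lambda>g. FB f (map g a)"])
qed

definition mset_enumerations :: "nat \<Rightarrow> 'd set \<Rightarrow> 'd multiset list \<Rightarrow> 'd list list set" where
  "mset_enumerations m D \<alpha>s = {ts. length ts = length \<alpha>s \<and>
     (\<forall>l<length \<alpha>s. length (ts ! l) = m \<and> set (ts ! l) \<subseteq> D \<and> mset (ts ! l) = \<alpha>s ! l)}"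

definition list_of_mset :: "'a multiset \<Rightarrow> 'a list" where
  "list_of_mset \<alpha> = (SOME xs. mset xs = \<alpha>)"

lemma mset_list_of_mset [simp]: "mset (list_of_mset \<alpha>) = \<alpha>"
  unfolding list_of_mset_def by (rule someI_ex) (rule ex_mset)

lemma multiset_cost_eq_Min:
  "multiset_cost m D F f \<alpha>s = ereal (1 / real m) *
     Min ((\<lambda>ts. \<Sum>i<m. F f (map (\<lambda>t. t ! i) ts)) ` mset_enumerations m D \<alpha>s)"
  unfolding multiset_cost_def mset_enumerations_def image_def
  by (intro arg_cong[where f = "\<lambda>X. ereal (1 / real m) * Min X"]) blast

lemma finite_mset_enumerations:
  assumes "finite D"
  shows "finite (mset_enumerations m D \<alpha>s)"
proof (rule finite_subset)
  show "mset_enumerations m D \<alpha>s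
      \<subseteq> {ts. set ts \<subseteq> {xs. set xs \<subseteq> D \<and> length xs = m} \<and> length ts = length \<alpha>s}"
    unfolding mset_enumerations_def by (force simp: in_set_conv_nth)
  show "finite {ts. set ts \<subseteq> {xs. set xs \<subseteq> D \<and> length xs = m} \<and> length ts = length \<alpha>s}"
    using assms by (intro finite_lists_length_eq)
qed

lemma list_of_mset_in_multiset_dom:
  "\<alpha> \<in> multiset_dom m D \<Longrightarrow> length (list_of_mset \<alpha>) = m \<and> set (list_of_mset \<alpha>) \<subseteq> D"
  using size_mset[of "list_of_mset \<alpha>"] set_mset_mset[of "list_of_mset \<alpha>"]
  unfolding multiset_dom_def by simp

lemma map_list_of_mset_in_mset_enumerations:
  assumes "set \<alpha>s \<subseteq> multiset_dom m D"
  shows "map list_of_mset \<alpha>s \<in> mset_enumerations m D \<alpha>s"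
proof -
  have "\<alpha>s ! l \<in> multiset_dom m D" if "l < length \<alpha>s" for l
    using assms that nth_mem by blast
  then show ?thesis
    unfolding mset_enumerations_def by (auto dest: list_of_mset_in_multiset_dom)
qed

lemma multiset_cost_attained:
  assumes "finite D" and "set \<alpha>s \<subseteq> multiset_dom m D"
  obtains ts where "ts \<in> mset_enumerations m D \<alpha>s"
    and "multiset_cost m D F f \<alpha>s = ereal (1 / real m) * (\<Sum>i<m. F f (map (\<lambda>t. t ! i) ts))"
proof -
  let ?cost = "\<lambda>ts. \<Sum>i<m. F f (map (\<lambda>t. t ! i) ts)"
  have "Min (?cost ` mset_enumerations m D \<alpha>s) \<in> ?cost ` mset_enumerations m D \<alpha>s"
    using finite_mset_enumerations[OF assms(1)] map_list_of_mset_in_mset_enumerations[OF assms(2)]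
    by (intro Min_in) auto
  then show ?thesis
    using that by (auto simp: multiset_cost_eq_Min)
qed

definition mset_lift :: "('c list \<Rightarrow> 'c) \<Rightarrow> ('d \<Rightarrow> 'c) \<Rightarrow> 'd multiset \<Rightarrow> 'c" where
  "mset_lift p g \<alpha> = p (map g (list_of_mset \<alpha>))"

lemma fully_symmetric_mset_eq:
  assumes "fully_symmetric C m w" and "p \<in> supp_w w" and "mset xs = mset ys"
    and "length ys = m" and "set ys \<subseteq> C"
  shows "p xs = p ys"
proof -
  obtain \<pi> where \<pi>: "\<pi> permutes {..<length ys}" and xs: "xs = permute_list \<pi> ys"
    using mset_eq_permutation[OF assms(3)] by metis
  have "\<And>zs \<sigma>. length zs = m \<Longrightarrow> set zs \<subseteq> C \<Longrightarrow> \<sigma> permutes {..<m} \<Longrightarrow>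
      p zs = p (map (\<lambda>i. zs ! \<sigma> i) [0..<m])"
    using assms(1,2) unfolding fully_symmetric_def by blast
  then have "p ys = p (map (\<lambda>i. ys ! \<pi> i) [0..<m])"
    using assms(4,5) \<pi> by simp
  then show ?thesis
    using xs assms(4) by (simp add: permute_list_def)
qed

lemma mset_lift_eq:
  assumes "fully_symmetric C m w" and "p \<in> supp_w w" and "g \<in> D \<rightarrow> C"
    and "mset xs = \<alpha>" and "length xs = m" and "set xs \<subseteq> D"
  shows "mset_lift p g \<alpha> = p (map g xs)"
  unfolding mset_lift_def using assms
  by (intro fully_symmetric_mset_eq[OF assms(1,2)]) (auto simp: Pi_iff)

lemma mset_lift_funcset:
  assumes "frac_pol tau ar C F m w" and "p \<in> supp_w w" and "g \<in> D \<rightarrow> C"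
  shows "mset_lift p g \<in> multiset_dom m D \<rightarrow> C"
proof
  fix \<alpha> assume "\<alpha> \<in> multiset_dom m D"
  then have "length (list_of_mset \<alpha>) = m" and "set (list_of_mset \<alpha>) \<subseteq> D"
    by (blast dest: list_of_mset_in_multiset_dom)+
  moreover have "g ` D \<subseteq> C"
    using assms(3) by blast
  ultimately show "mset_lift p g \<alpha> \<in> C"
    unfolding mset_lift_def by (intro frac_pol_closed[OF assms(1,2)]) auto
qed

lemma frac_pol_mset_lift_le:
  assumes pol: "frac_pol tau ar C F m w" and sym: "fully_symmetric C m w"
    and f: "f \<in> tau" and g: "g \<in> D \<rightarrow> C"
    and ts: "ts \<in> mset_enumerations m D \<alpha>s" and len: "length \<alpha>s = ar f"
  shows "(\<Sum>p\<in>supp_w w. ereal (of_rat (w p)) * F f (map (mset_lift p g) \<alpha>s))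
    \<le> ereal (1 / real m) * (\<Sum>i<m. F f (map g (map (\<lambda>t. t ! i) ts)))"
proof -
  define as where "as = map (\<lambda>i. map g (map (\<lambda>t. t ! i) ts)) [0..<m]"
  have ts_len: "length ts = ar f"
    using ts len unfolding mset_enumerations_def by simp
  have ts_l: "length (ts ! l) = m" "set (ts ! l) \<subseteq> D" "mset (ts ! l) = \<alpha>s ! l"
    if "l < ar f" for l
    using ts that len unfolding mset_enumerations_def by auto
  have rows: "map (\<lambda>a. a ! l) as = map g (ts ! l)" if "l < ar f" for l
    using ts_l[OF that] ts_len that unfolding as_def by (auto intro: nth_equalityI)
  have "map (mset_lift p g) \<alpha>s = map (\<lambda>l. p (map (\<lambda>a. a ! l) as)) [0..<ar f]"
    if "p \<in> supp_w w" for p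
    using len by (auto intro!: nth_equalityI simp: rows ts_l mset_lift_eq[OF sym that g])
  then have "(\<Sum>p\<in>supp_w w. ereal (of_rat (w p)) * F f (map (mset_lift p g) \<alpha>s))
      = (\<Sum>p\<in>supp_w w. ereal (of_rat (w p)) * F f (map (\<lambda>l. p (map (\<lambda>a. a ! l) as)) [0..<ar f]))"
    by simp
  also have "\<dots> \<le> ereal (1 / real m) * (\<Sum>a\<leftarrow>as. F f a)"
  proof -
    have "set (map (\<lambda>t. t ! i) ts) \<subseteq> D" if "i < m" for i
      using ts_l that ts_len by (fastforce simp: in_set_conv_nth intro: nth_mem)
    then have "length a = ar f \<and> set a \<subseteq> C" if "a \<in> set as" for a
      using that ts_len g unfolding as_def by (fastforce simp: Pi_iff)
    then show ?thesis
      by (intro frac_pol_cost_le[OF pol f]) (simp_all add: as_def)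
  qed
  also have "(\<Sum>a\<leftarrow>as. F f a) = (\<Sum>i<m. F f (map g (map (\<lambda>t. t ! i) ts)))"
    unfolding as_def by (simp add: sum_list_sum_nth atLeast0LessThan)
  finally show ?thesis .
qed

lemma frac_hom_sum_cost_le:
  assumes hom: "frac_hom tau ar A FA B FB w" and f: "f \<in> tau"
    and xs: "\<And>i. i \<in> I \<Longrightarrow> length (xs i) = ar f \<and> set (xs i) \<subseteq> A"
  shows "(\<Sum>g\<in>supp_w w. ereal (of_rat (w g)) * (\<Sum>i\<in>I. FB f (map g (xs i))))
    \<le> (\<Sum>i\<in>I. FA f (xs i))"
proof -
  have "(\<Sum>g\<in>supp_w w. ereal (of_rat (w g)) * (\<Sum>i\<in>I. FB f (map g (xs i))))
      = (\<Sum>i\<in>I. \<Sum>g\<in>supp_w w. ereal (of_rat (w g)) * FB f (map g (xs i)))"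
    using hom unfolding frac_hom_def by (simp add: sum_distrib_left_ereal sum.swap[of _ I])
  also have "\<dots> \<le> (\<Sum>i\<in>I. FA f (xs i))"
    using xs by (intro sum_mono frac_hom_cost_le[OF hom f]) auto
  finally show ?thesis .
qed

lemma mset_lift_cost_le:
  assumes hom: "frac_hom tau ar D FD C FG w\<^sub>1"
    and pol: "frac_pol tau ar C FG m w\<^sub>2" and sym: "fully_symmetric C m w\<^sub>2"
    and "finite D" and f: "f \<in> tau" and len: "length \<alpha>s = ar f" and \<alpha>s: "set \<alpha>s \<subseteq> multiset_dom m D"
  shows "(\<Sum>(g, p)\<in>supp_w w\<^sub>1 \<times> supp_w w\<^sub>2. ereal (of_rat (w\<^sub>1 g * w\<^sub>2 p)) * FG f (map (mset_lift p g) \<alpha>s))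
    \<le> multiset_cost m D FD f \<alpha>s"
proof -
  obtain ts where ts: "ts \<in> mset_enumerations m D \<alpha>s"
    and cost: "multiset_cost m D FD f \<alpha>s = ereal (1 / real m) * (\<Sum>i<m. FD f (map (\<lambda>t. t ! i) ts))"
    using multiset_cost_attained[OF \<open>finite D\<close> \<alpha>s] .
  define col where "col i = map (\<lambda>t. t ! i) ts" for i
  have col: "length (col i) = ar f \<and> set (col i) \<subseteq> D" if "i \<in> {..<m}" for i
    using ts that len unfolding mset_enumerations_def col_def
    by (fastforce simp: in_set_conv_nth intro: nth_mem)
  have w_nonneg: "w\<^sub>1 g \<ge> 0" "w\<^sub>2 p \<ge> 0" for g p
    using hom pol unfolding frac_hom_def frac_pol_def by simp_all
  have "(\<Sum>(g, p)\<in>supp_w w\<^sub>1 \<times> supp_w w\<^sub>2. ereal (of_rat (w\<^sub>1 g * w\<^sub>2 p)) * FG f (map (mset_lift p g) \<alpha>s))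
      = (\<Sum>g\<in>supp_w w\<^sub>1. ereal (of_rat (w\<^sub>1 g)) *
           (\<Sum>p\<in>supp_w w\<^sub>2. ereal (of_rat (w\<^sub>2 p)) * FG f (map (mset_lift p g) \<alpha>s)))"
    by (simp add: sum.cartesian_product[symmetric] sum_distrib_left_ereal w_nonneg of_rat_mult mult.assoc
        flip: times_ereal.simps(1))
  also have "\<dots> \<le> (\<Sum>g\<in>supp_w w\<^sub>1. ereal (of_rat (w\<^sub>1 g)) *
           (ereal (1 / real m) * (\<Sum>i<m. FG f (map g (col i)))))"
    unfolding col_def using w_nonneg frac_hom_funcset[OF hom]
    by (intro sum_mono ereal_mult_left_mono frac_pol_mset_lift_le[OF pol sym f _ ts len]) auto
  also have "\<dots> = ereal (1 / real m) *
      (\<Sum>g\<in>supp_w w\<^sub>1. ereal (of_rat (w\<^sub>1 g)) * (\<Sum>i<m. FG f (map g (col i))))"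
    by (simp add: sum_distrib_left_ereal mult.left_commute)
  also have "\<dots> \<le> ereal (1 / real m) * (\<Sum>i<m. FD f (col i))"
    using col by (intro ereal_mult_left_mono frac_hom_sum_cost_le[OF hom f]) auto
  finally show ?thesis
    unfolding cost col_def .
qed

theorem lemma9:
  fixes tau :: "'s set" and ar :: "'s \<Rightarrow> nat"
    and C :: "'c set" and FG :: "'s \<Rightarrow> 'c list \<Rightarrow> ereal"
    and D :: "'d set" and FD :: "'s \<Rightarrow> 'd list \<Rightarrow> ereal"
    and m :: nat
  assumes "finite tau"
    and "valued_structure tau ar C FG"
    and "valued_structure tau ar D FD"
    and "finite D"
    and "\<exists>w. frac_hom tau ar D FD C FG w"
    and "m \<ge> 2"
    and "\<exists>w. frac_pol tau ar C FG m w \<and> fully_symmetric C m w"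
  shows "\<exists>w. frac_hom tau ar (multiset_dom m D) (multiset_cost m D FD) C FG w"
proof -
  obtain w\<^sub>1 where hom: "frac_hom tau ar D FD C FG w\<^sub>1"
    using assms(5) by blast
  obtain w\<^sub>2 where pol: "frac_pol tau ar C FG m w\<^sub>2" and sym: "fully_symmetric C m w\<^sub>2"
    using assms(7) by blast
  let ?Q = "supp_w w\<^sub>1 \<times> supp_w w\<^sub>2"
  have "frac_hom tau ar (multiset_dom m D) (multiset_cost m D FD) C FG
      (push_weight (\<lambda>(g, p). mset_lift p g) ?Q (\<lambda>(g, p). w\<^sub>1 g * w\<^sub>2 p))"
  proof (rule frac_hom_push_weight)
    show "finite ?Q" and "\<And>q. q \<in> ?Q \<Longrightarrow> (case q of (g, p) \<Rightarrow> w\<^sub>1 g * w\<^sub>2 p) \<ge> 0"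
      and "(\<Sum>(g, p)\<in>?Q. w\<^sub>1 g * w\<^sub>2 p) = 1"
      using hom pol unfolding frac_hom_def frac_pol_def
      by (auto simp: sum.cartesian_product[symmetric] sum_product[symmetric])
    show "(case q of (g, p) \<Rightarrow> mset_lift p g) \<in> multiset_dom m D \<rightarrow> C" if "q \<in> ?Q" for q
      using that by (cases q) (simp add: mset_lift_funcset[OF pol _ frac_hom_funcset[OF hom]])
    show "\<And>f \<alpha>s. f \<in> tau \<Longrightarrow> length \<alpha>s = ar f \<Longrightarrow> set \<alpha>s \<subseteq> multiset_dom m D \<Longrightarrow>
        (\<Sum>q\<in>?Q. ereal (of_rat (case q of (g, p) \<Rightarrow> w\<^sub>1 g * w\<^sub>2 p)) *
           FG f (map (case q of (g, p) \<Rightarrow> mset_lift p g) \<alpha>s))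
        \<le> multiset_cost m D FD f \<alpha>s"
      using mset_lift_cost_le[OF hom pol sym \<open>finite D\<close>] by (simp add: case_prod_beta')
  qed
  then show ?thesis by blast
qed

end
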